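(* Let $q$ be a prime power, $M\geq2$ an integer with $(M,q)=1$, and $m\geq1$. Let $X\in\mathrm{Sp}(2m,q)$ be conjugate in $\mathrm{GL}(2m,q)$ to the $2m\times 2m$ matrix with $-1$ on the diagonal, $1$ on the superdiagonal and $0$ elsewhere (a single Jordan block with eigenvalue $-1$). Then $X$ is an $M$-th power in $\mathrm{Sp}(2m,q)$ if and only if $M$ is odd.
   Context: $\mathrm{Sp}(2m,q)$ is the symplectic group of a non-degenerate alternating form on $\mathbb{F}_q^{2m}$. An element $X$ of a group $G$ is an $M$-th power in $G$ if $Y^M=X$ for some $Y\in G$. *)

theory Defs
  imports "Jordan_Normal_Form.Jordan_Normal_Form"
begin

definition nondeg_alternating_form :: "nat \<Rightarrow> 'a :: field mat \<Rightarrow> bool" where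
  "nondeg_alternating_form n J \<longleftrightarrow>
     J \<in> carrier_mat n n \<and> invertible_mat J \<and>
     (\<forall>v \<in> carrier_vec n. v \<bullet> (J *\<^sub>v v) = 0)"

definition symplectic_group :: "nat \<Rightarrow> 'a :: field mat \<Rightarrow> 'a mat set" where
  "symplectic_group n J = {A \<in> carrier_mat n n. transpose_mat A * J * A = J}"

definition is_Mth_power_in :: "'a :: semiring_1 mat set \<Rightarrow> nat \<Rightarrow> 'a mat \<Rightarrow> bool" where
  "is_Mth_power_in G M X \<longleftrightarrow> (\<exists>Y \<in> G. Y ^\<^sub>m M = X)"

end

theory Submission
  imports Defs "HOL-Number_Theory.Residues" "HOL-Computational_Algebra.Polynomial"
begin

text \<open>X is conjugate to -1 + N with N nilpotent, so in characteristic p it has order dividing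
  2 p^k once p^k \<ge> 2m. For odd M prime to q, M is invertible modulo this order and X is the M-th
  power of one of its own powers. For even M, q is odd, and an M-th root Y of X gives the
  symplectic square root Z = Y^(M/2). Then S = Z + Z^-1 satisfies S^T J = J S, so J S^(2m-1) is
  skew-symmetric. But X + 1 = S Z is conjugate to the nilpotent Jordan block, whose (2m-1)-st power
  has rank one, so J S^(2m-1) = J (X + 1)^(2m-1) Z^-(2m-1) has rank one; and a rank one matrix is
  never skew-symmetric when 2 is invertible.\<close>

lemma pow_mat_add:
  assumes "A \<in> carrier_mat n n"
  shows "A ^\<^sub>m (k + l) = A ^\<^sub>m k * A ^\<^sub>m l"
proof -
  interpret semiring "ring_mat TYPE('a) n undefined" by (rule semiring_mat)
  show ?thesis using assms nat_pow_mult[of A k l] by (simp add: ring_mat_simps flip: pow_mat_ring_pow)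
qed

lemma pow_mat_mult:
  assumes "A \<in> carrier_mat n n"
  shows "A ^\<^sub>m (k * l) = (A ^\<^sub>m k) ^\<^sub>m l"
proof -
  interpret semiring "ring_mat TYPE('a) n undefined" by (rule semiring_mat)
  show ?thesis using assms nat_pow_pow[of A k l] by (simp add: ring_mat_simps flip: pow_mat_ring_pow)
qed

lemma pow_mat_mult_distrib:
  assumes "A \<in> carrier_mat n n" "B \<in> carrier_mat n n" "A * B = B * A"
  shows "(A * B) ^\<^sub>m k = A ^\<^sub>m k * B ^\<^sub>m k"
proof -
  interpret semiring "ring_mat TYPE('a) n undefined" by (rule semiring_mat)
  show ?thesis using assms pow_mult_distrib[of A B k] by (simp add: ring_mat_simps flip: pow_mat_ring_pow)
qed

lemma one_pow_mat [simp]: "1\<^sub>m n ^\<^sub>m k = 1\<^sub>m n"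
  by (induction k) simp_all

lemma transpose_pow_mat:
  fixes A :: "'a :: comm_ring_1 mat"
  assumes "A \<in> carrier_mat n n"
  shows "transpose_mat (A ^\<^sub>m k) = transpose_mat A ^\<^sub>m k"
proof (induction k)
  case (Suc k)
  have "transpose_mat (A ^\<^sub>m Suc k) = transpose_mat A * transpose_mat A ^\<^sub>m k"
    using transpose_mult[OF pow_carrier_mat[OF assms] assms, of k] by (simp add: Suc.IH)
  also have "\<dots> = transpose_mat A ^\<^sub>m Suc k"
    using assms pow_mat_add[of "transpose_mat A" n 1 k] pow_mat_add[of "transpose_mat A" n k 1]
    by simp
  finally show ?case .
qed (use assms in simp)

lemma pow_mat_mod:
  assumes "A \<in> carrier_mat n n" "A ^\<^sub>m r = 1\<^sub>m n"
  shows "A ^\<^sub>m k = A ^\<^sub>m (k mod r)"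
proof -
  have "A ^\<^sub>m k = (A ^\<^sub>m r) ^\<^sub>m (k div r) * A ^\<^sub>m (k mod r)"
    using assms(1) by (simp flip: pow_mat_mult pow_mat_add)
  then show ?thesis using assms by simp
qed

lemma of_nat_CHAR_power_choose_eq_0:
  assumes "prime CHAR('a::comm_ring_1)" "0 < k" "k < CHAR('a) ^ s"
  shows "(of_nat (CHAR('a) ^ s choose k) :: 'a) = 0"
proof -
  let ?x = "[:0, 1:] :: 'a poly"
  have "prime CHAR('a poly)" using assms(1) by simp
  then have "(?x + 1) ^ (CHAR('a) ^ s) = ?x ^ (CHAR('a) ^ s) + 1"
    by (simp add: freshmans_dream')
  moreover have "?x + 1 = [:1, 1:]" by (simp add: one_pCons)
  ultimately have "Polynomial.coeff ([:1, 1:] ^ (CHAR('a) ^ s)) k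
      = Polynomial.coeff (?x ^ (CHAR('a) ^ s) + 1) k"
    by simp
  moreover have "Polynomial.coeff ([:1, 1:] ^ (CHAR('a) ^ s)) k = (of_nat (CHAR('a) ^ s choose k) :: 'a)"
    using coeff_linear_poly_power[of k "CHAR('a) ^ s" "1::'a" 1] assms(3) by simp
  moreover have "Polynomial.coeff (?x ^ (CHAR('a) ^ s) + 1) k = 0"
    using assms(2,3) by (simp flip: monom_altdef[of "1::'a" "CHAR('a) ^ s", simplified])
  ultimately show ?thesis by simp
qed

lemma jordan_block_pow_CHAR_power:
  fixes c :: "'a :: comm_ring_1"
  assumes "prime CHAR('a)" "n \<le> CHAR('a) ^ s"
  shows "jordan_block n c ^\<^sub>m (CHAR('a) ^ s) = c ^ (CHAR('a) ^ s) \<cdot>\<^sub>m 1\<^sub>m n"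
  unfolding jordan_block_pow
  by (rule eq_matI) (use assms of_nat_CHAR_power_choose_eq_0[OF assms(1), of "_ - _" s] in auto)

lemma smult_one_pow_mat: "(c \<cdot>\<^sub>m 1\<^sub>m n) ^\<^sub>m k = (c ^ k) \<cdot>\<^sub>m (1\<^sub>m n :: 'a :: comm_ring_1 mat)"
  by (induction k) (auto simp: mult_smult_distrib mult.commute)

lemma similar_jordan_block_pow_eq_one:
  fixes X :: "'a :: comm_ring_1 mat"
  assumes "prime CHAR('a)" "n \<le> CHAR('a) ^ s" "c ^ r = 1"
    and "X \<in> carrier_mat n n" "similar_mat X (jordan_block n c)"
  shows "X ^\<^sub>m (CHAR('a) ^ s * r) = 1\<^sub>m n"
proof -
  obtain P Q where wit: "similar_mat_wit X (jordan_block n c) P Q"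
    using assms(5) unfolding similar_mat_def by blast
  have "jordan_block n c ^\<^sub>m (CHAR('a) ^ s * r) = (c ^ (CHAR('a) ^ s) \<cdot>\<^sub>m 1\<^sub>m n) ^\<^sub>m r"
    by (simp only: pow_mat_mult[OF jordan_block_carrier] jordan_block_pow_CHAR_power[OF assms(1,2)])
  also have "\<dots> = c ^ (r * CHAR('a) ^ s) \<cdot>\<^sub>m 1\<^sub>m n"
    by (simp add: smult_one_pow_mat mult.commute flip: power_mult)
  also have "\<dots> = 1\<^sub>m n"
    using assms(3) by (intro eq_matI) (simp_all add: power_mult)
  finally show ?thesis
    using similar_mat_witD2[OF assms(4) wit] similar_mat_wit_pow_id[OF wit] by simp
qed

lemma similar_jordan_block_neg_one_pow_eq_one:
  fixes X :: "'a :: {finite, field} mat"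
  assumes "X \<in> carrier_mat n n" "similar_mat X (jordan_block n (-1))"
  shows "X ^\<^sub>m (CHAR('a) ^ n * 2) = 1\<^sub>m n"
proof -
  have p: "prime CHAR('a)" by (simp add: prime_CHAR_semidom finite_imp_CHAR_pos)
  have "n < 2 ^ n" by (rule less_exp)
  also have "\<dots> \<le> CHAR('a) ^ n" using prime_ge_2_nat[OF p] by (simp add: power_mono)
  finally show ?thesis using similar_jordan_block_pow_eq_one[OF p _ _ assms] by simp
qed

lemma is_Mth_power_in_if_pow_eq_one:
  assumes "X \<in> carrier_mat n n" "\<And>k. X ^\<^sub>m k \<in> G" "X ^\<^sub>m r = 1\<^sub>m n" "coprime M r"
  shows "is_Mth_power_in G M X"
proof -
  obtain x where x: "[M * x = 1] (mod r)" using cong_solve_coprime_nat[OF assms(4)] by auto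
  have "(X ^\<^sub>m x) ^\<^sub>m M = X ^\<^sub>m (M * x mod r)"
    using pow_mat_mult[OF assms(1), of x M] pow_mat_mod[OF assms(1,3)] by (simp add: mult.commute)
  also have "M * x mod r = 1 mod r" using x unfolding cong_def .
  also have "X ^\<^sub>m (1 mod r) = X"
    using pow_mat_mod[OF assms(1,3), of 1] assms(1) by simp
  finally show ?thesis
    using assms(2) unfolding is_Mth_power_in_def by blast
qed

lemma symplectic_group_mult:
  assumes "A \<in> symplectic_group n J" "B \<in> symplectic_group n J" "J \<in> carrier_mat n n"
  shows "A * B \<in> symplectic_group n J"
proof -
  have A: "A \<in> carrier_mat n n" "transpose_mat A * J * A = J"
    and B: "B \<in> carrier_mat n n" "transpose_mat B * J * B = J"
    using assms(1,2) unfolding symplectic_group_def by auto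
  have "transpose_mat (A * B) * J * (A * B) = transpose_mat B * (transpose_mat A * J * A) * B"
    using A(1) B(1) assms(3) by (simp add: transpose_mult assoc_mult_mat[of _ n n _ n _ n])
  then show ?thesis
    using A B unfolding symplectic_group_def by simp
qed

lemma symplectic_group_pow:
  assumes "A \<in> symplectic_group n J" "J \<in> carrier_mat n n"
  shows "A ^\<^sub>m k \<in> symplectic_group n J"
proof (induction k)
  case 0
  then show ?case using assms unfolding symplectic_group_def by auto
qed (simp add: symplectic_group_mult assms)

lemma nondeg_alternating_form_skew:
  assumes "nondeg_alternating_form n J"
  shows "transpose_mat J = - J"
proof -
  have J: "J \<in> carrier_mat n n"
    and alt: "\<And>v. v \<in> carrier_vec n \<Longrightarrow> v \<bullet> (J *\<^sub>v v) = 0"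
    using assms unfolding nondeg_alternating_form_def by auto
  define b where "b u v = u \<bullet> (J *\<^sub>v v)" for u v :: "'a vec"
  have b_unit: "b (unit_vec n i) (unit_vec n j) = J $$ (i, j)" if "i < n" "j < n" for i j
    using J that by (simp add: b_def scalar_prod_left_unit)
  have b_antisym: "b u v = - b v u" if u: "u \<in> carrier_vec n" and v: "v \<in> carrier_vec n" for u v
  proof -
    have Ju: "J *\<^sub>v u \<in> carrier_vec n" and Jv: "J *\<^sub>v v \<in> carrier_vec n" using J u v by auto
    have "0 = b (u + v) (u + v)" using alt u v by (simp add: b_def)
    also have "\<dots> = (u + v) \<bullet> (J *\<^sub>v u + J *\<^sub>v v)"
      unfolding b_def by (simp only: mult_add_distrib_mat_vec[OF J u v])
    also have "\<dots> = (b u u + b u v) + (b v u + b v v)"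
      unfolding b_def
      by (simp only: add_scalar_prod_distrib[OF u v add_carrier_vec[OF Ju Jv]]
          scalar_prod_add_distrib[OF u Ju Jv] scalar_prod_add_distrib[OF v Ju Jv])
    also have "\<dots> = b u v + b v u" using alt u v by (simp add: b_def)
    finally show ?thesis by (simp add: eq_neg_iff_add_eq_0)
  qed
  show ?thesis
  proof (rule eq_matI)
    fix i j assume "i < dim_row (- J)" "j < dim_col (- J)"
    then have ij: "i < n" "j < n" using J by auto
    have "transpose_mat J $$ (i, j) = b (unit_vec n j) (unit_vec n i)" using J ij b_unit by simp
    also have "\<dots> = - b (unit_vec n i) (unit_vec n j)" by (rule b_antisym) simp_all
    finally show "transpose_mat J $$ (i, j) = (- J) $$ (i, j)" using J ij b_unit by simp
  qed (use J in simp_all)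
qed

lemma nondeg_alternating_form_left_inverse:
  assumes "nondeg_alternating_form n J"
  obtains Ji where "Ji \<in> carrier_mat n n" "Ji * J = 1\<^sub>m n"
proof -
  have J: "J \<in> carrier_mat n n" and "invertible_mat J"
    using assms unfolding nondeg_alternating_form_def by auto
  then obtain Ji where "inverts_mat J Ji" "inverts_mat Ji J"
    unfolding invertible_mat_def by blast
  then have JJi: "J * Ji = 1\<^sub>m n" and JiJ: "Ji * J = 1\<^sub>m (dim_row Ji)"
    using J unfolding inverts_mat_def by simp_all
  have "dim_row Ji = dim_col J" using arg_cong[OF JiJ, of dim_col] by simp
  moreover have "dim_col Ji = n" using arg_cong[OF JJi, of dim_col] by simp
  ultimately have Ji: "Ji \<in> carrier_mat n n" using J by (intro carrier_matI) simp_all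
  show thesis using JiJ Ji by (intro that) simp_all
qed

lemma outer_product_not_skew:
  fixes G :: "'a :: field mat"
  assumes "(2::'a) \<noteq> 0" "G \<in> carrier_mat n n"
    and G: "\<And>i j. i < n \<Longrightarrow> j < n \<Longrightarrow> G $$ (i, j) = u i * v j"
    and k: "k < n" "u k \<noteq> 0" and l: "l < n" "v l \<noteq> 0"
  shows "transpose_mat G \<noteq> - G"
proof
  assume skew: "transpose_mat G = - G"
  have anti: "u i * v j = - (u j * v i)" if "i < n" "j < n" for i j
  proof -
    have "G $$ (i, j) = transpose_mat G $$ (j, i)" using assms(2) that by simp
    also have "\<dots> = - G $$ (j, i)" using assms(2) that by (simp add: skew)
    finally show ?thesis using G that by simp
  qed
  have diag: "u i * v i = 0" if "i < n" for i
  proof -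
    have "u i * v i + u i * v i = 0" using anti[OF that that] by (simp only: eq_neg_iff_add_eq_0)
    then have "2 * (u i * v i) = 0" by (simp only: mult_2)
    then show ?thesis using assms(1) by simp
  qed
  have "v k = 0" using diag[OF k(1)] k(2) by simp
  moreover have "u l = 0" using diag[OF l(1)] l(2) by simp
  ultimately have "u k * v l = 0" using anti[OF k(1) l(1)] by simp
  then show False using k l by simp
qed

lemma left_invertible_mat_col_nonzero:
  fixes A :: "'a :: field mat"
  assumes "A \<in> carrier_mat n n" "Ai \<in> carrier_mat n n" "Ai * A = 1\<^sub>m n" "j < n"
  shows "\<exists>k<n. A $$ (k, j) \<noteq> 0"
proof (rule ccontr)
  assume "\<not> (\<exists>k<n. A $$ (k, j) \<noteq> 0)"
  then have "(Ai * A) $$ (j, j) = 0" using assms(1,2,4) by (simp add: scalar_prod_def)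
  then show False using assms(3,4) by simp
qed

lemma right_invertible_mat_row_nonzero:
  fixes B :: "'a :: field mat"
  assumes "B \<in> carrier_mat n n" "Bi \<in> carrier_mat n n" "B * Bi = 1\<^sub>m n" "i < n"
  shows "\<exists>l<n. B $$ (i, l) \<noteq> 0"
proof -
  have "transpose_mat Bi * transpose_mat B = 1\<^sub>m n"
    using assms(1-3) by (simp flip: transpose_mult)
  then obtain l where "l < n" "transpose_mat B $$ (l, i) \<noteq> 0"
    using left_invertible_mat_col_nonzero[of "transpose_mat B" n "transpose_mat Bi" i] assms by auto
  then show ?thesis using assms(1,4) by (intro exI[of _ l]) simp
qed

lemma index_jordan_block_zero_pow_pred:
  assumes "i < n" "j < n"
  shows "(jordan_block n (0 :: 'a :: comm_ring_1) ^\<^sub>m (n - 1)) $$ (i, j)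
    = (if i = 0 \<and> j = n - 1 then 1 else 0)"
  using assms unfolding jordan_block_pow by (auto simp: power_0_left)

lemma index_mult_jordan_block_zero_pow_pred_mult:
  fixes A B :: "'a :: comm_ring_1 mat"
  assumes A: "A \<in> carrier_mat n n" and B: "B \<in> carrier_mat n n" and "i < n" "j < n"
  shows "(A * jordan_block n 0 ^\<^sub>m (n - 1) * B) $$ (i, j) = A $$ (i, 0) * B $$ (n - 1, j)"
proof -
  let ?N = "jordan_block n (0 :: 'a) ^\<^sub>m (n - 1)"
  have AN: "(A * ?N) $$ (i, l) = (if l = n - 1 then A $$ (i, 0) else 0)" if "l < n" for l
  proof -
    have "(A * ?N) $$ (i, l) = (\<Sum>k = 0..<n. A $$ (i, k) * ?N $$ (k, l))"
      using A \<open>i < n\<close> that by (simp add: scalar_prod_def)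
    also have "\<dots> = (\<Sum>k = 0..<n. if k = 0 then (if l = n - 1 then A $$ (i, 0) else 0) else 0)"
      by (rule sum.cong) (use that index_jordan_block_zero_pow_pred[of _ n l, where 'a = 'a] in auto)
    finally show ?thesis using \<open>i < n\<close> by simp
  qed
  have "(A * ?N * B) $$ (i, j) = (\<Sum>l = 0..<n. (A * ?N) $$ (i, l) * B $$ (l, j))"
    using A B assms(3,4) by (simp add: scalar_prod_def)
  also have "\<dots> = (\<Sum>l = 0..<n. if l = n - 1 then A $$ (i, 0) * B $$ (l, j) else 0)"
    by (rule sum.cong) (use AN in auto)
  finally show ?thesis using \<open>i < n\<close> by simp
qed

lemma conj_jordan_block_zero_pow_pred_not_skew:
  fixes A B :: "'a :: field mat"
  assumes "(2::'a) \<noteq> 0" "0 < n"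
    and A: "A \<in> carrier_mat n n" "Ai \<in> carrier_mat n n" "Ai * A = 1\<^sub>m n"
    and B: "B \<in> carrier_mat n n" "Bi \<in> carrier_mat n n" "B * Bi = 1\<^sub>m n"
  shows "transpose_mat (A * jordan_block n 0 ^\<^sub>m (n - 1) * B)
    \<noteq> - (A * jordan_block n 0 ^\<^sub>m (n - 1) * B)"
proof -
  obtain k where "k < n" "A $$ (k, 0) \<noteq> 0"
    using left_invertible_mat_col_nonzero[OF A] assms(2) by blast
  moreover obtain l where "l < n" "B $$ (n - 1, l) \<noteq> 0"
    using right_invertible_mat_row_nonzero[OF B, of "n - 1"] assms(2) by auto
  ultimately show ?thesis
    using assms(1) A(1) B(1) index_mult_jordan_block_zero_pow_pred_mult[OF A(1) B(1)]
    by (intro outer_product_not_skew[of _ n "\<lambda>i. A $$ (i, 0)" "\<lambda>j. B $$ (n - 1, j)" k l]) auto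
qed

lemma symplectic_group_inverse:
  fixes Z J :: "'a :: field mat"
  assumes "Z \<in> symplectic_group n J" "J \<in> carrier_mat n n"
    and "Ji \<in> carrier_mat n n" "Ji * J = 1\<^sub>m n"
  obtains Zi where "Zi \<in> carrier_mat n n" "Zi * Z = 1\<^sub>m n" "Z * Zi = 1\<^sub>m n"
proof -
  have Z: "Z \<in> carrier_mat n n" "transpose_mat Z * J * Z = J"
    using assms(1) unfolding symplectic_group_def by auto
  define Zi where "Zi = Ji * transpose_mat Z * J"
  have Zi: "Zi \<in> carrier_mat n n" using Z assms(2,3) by (simp add: Zi_def)
  have "Zi * Z = Ji * (transpose_mat Z * J * Z)"
    using Z(1) assms(2,3) by (simp add: Zi_def assoc_mult_mat[of _ n n _ n _ n])
  then have "Zi * Z = 1\<^sub>m n" using Z(2) assms(4) by simp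
  with Zi show thesis using mat_mult_left_right_inverse[OF Zi Z(1)] by (intro that)
qed

lemma symplectic_add_inverse_self_adjoint:
  assumes "Z \<in> symplectic_group n J" "J \<in> carrier_mat n n" "Zi \<in> carrier_mat n n" "Z * Zi = 1\<^sub>m n"
  shows "transpose_mat (Z + Zi) * J = J * (Z + Zi)"
proof -
  have Z: "Z \<in> carrier_mat n n" "transpose_mat Z * J * Z = J"
    using assms(1) unfolding symplectic_group_def by auto
  note carriers = Z(1) assms(2,3) transpose_carrier_mat
  have Zt: "transpose_mat Z * J = J * Zi"
  proof -
    have "transpose_mat Z * J = transpose_mat Z * J * (Z * Zi)" using assms(4) carriers by simp
    also have "\<dots> = (transpose_mat Z * J * Z) * Zi"
      using carriers by (simp add: assoc_mult_mat[of _ n n _ n _ n])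
    finally show ?thesis using Z(2) by simp
  qed
  have Zit: "transpose_mat Zi * J = J * Z"
  proof -
    have "transpose_mat Zi * J = transpose_mat Zi * (transpose_mat Z * J * Z)" using Z(2) by simp
    also have "\<dots> = transpose_mat (Z * Zi) * J * Z"
      using carriers by (simp add: transpose_mult assoc_mult_mat[of _ n n _ n _ n])
    finally show ?thesis using assms(4) carriers by simp
  qed
  show ?thesis
    using carriers Zt Zit
    by (simp add: transpose_add add_mult_distrib_mat mult_add_distrib_mat comm_add_mat[of _ n n])
qed

lemma self_adjoint_pow_skew:
  fixes S J :: "'a :: comm_ring_1 mat"
  assumes S: "S \<in> carrier_mat n n" and J: "J \<in> carrier_mat n n"
    and adj: "transpose_mat S * J = J * S" and skew: "transpose_mat J = - J"
  shows "transpose_mat (J * S ^\<^sub>m k) = - (J * S ^\<^sub>m k)"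
proof -
  have adj_pow: "transpose_mat S ^\<^sub>m k * J = J * S ^\<^sub>m k"
  proof (induction k)
    case (Suc k)
    have "transpose_mat S ^\<^sub>m Suc k * J = transpose_mat S ^\<^sub>m k * (transpose_mat S * J)"
      using S J by (simp add: assoc_mult_mat[of _ n n _ n _ n])
    also have "\<dots> = J * S ^\<^sub>m k * S"
      using S J by (simp add: adj Suc.IH flip: assoc_mult_mat[of _ n n _ n _ n])
    finally show ?case using S J by (simp add: assoc_mult_mat[of _ n n _ n _ n])
  qed (use S J in simp)
  have "transpose_mat (J * S ^\<^sub>m k) = transpose_mat S ^\<^sub>m k * - J"
    using transpose_mult[OF J pow_carrier_mat[OF S, of k]] by (simp add: transpose_pow_mat[OF S] skew)
  also have "\<dots> = - (transpose_mat S ^\<^sub>m k * J)"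
    by (rule uminus_mult_right_mat) (use S J in simp_all)
  also have "\<dots> = - (J * S ^\<^sub>m k)" by (simp only: adj_pow)
  finally show ?thesis .
qed

lemma similar_jordan_block_neg_one_add_one_pow:
  assumes "X \<in> carrier_mat n n" "similar_mat_wit X (jordan_block n (-1 :: 'a :: comm_ring_1)) P Q"
  shows "(X + 1\<^sub>m n) ^\<^sub>m k = P * jordan_block n 0 ^\<^sub>m k * Q"
proof -
  note PQ = similar_mat_witD2[OF assms]
  have "jordan_block n 0 = jordan_block n (-1 :: 'a) + 1\<^sub>m n"
    by (rule eq_matI) (auto simp: jordan_block_def)
  then have "P * jordan_block n 0 * Q = P * jordan_block n (-1) * Q + P * Q"
    using PQ(6,7) by (simp add: mult_add_distrib_mat[of _ n n _ n] add_mult_distrib_mat[of _ n n _ _ n])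
  then have "similar_mat_wit (X + 1\<^sub>m n) (jordan_block n 0) P Q"
    using PQ assms(1) unfolding similar_mat_wit_def Let_def by auto
  then show ?thesis by (rule similar_mat_wit_pow_id)
qed

lemma mult_inverse_pair_conj:
  fixes Q W V P :: "'a :: semiring_1 mat"
  assumes "Q \<in> carrier_mat n n" "W \<in> carrier_mat n n"
    and "V \<in> carrier_mat n n" "P \<in> carrier_mat n n"
    and "W * V = 1\<^sub>m n" "Q * P = 1\<^sub>m n"
  shows "(Q * W) * (V * P) = 1\<^sub>m n"
proof -
  have "(Q * W) * (V * P) = Q * ((W * V) * P)"
    using assms(1-4) by (simp add: assoc_mult_mat[of _ n n _ n _ n] mult_carrier_mat[of _ n n])
  then show ?thesis using assms(4-6) by simp
qed

lemma add_inverse_pow: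
  assumes "Z \<in> carrier_mat n n" "Zi \<in> carrier_mat n n" "Zi * Z = 1\<^sub>m n" "Z * Zi = 1\<^sub>m n"
  shows "(Z + Zi) ^\<^sub>m k = (Z * Z + 1\<^sub>m n) ^\<^sub>m k * Zi ^\<^sub>m k"
proof -
  have S: "Z + Zi \<in> carrier_mat n n" using assms(1,2) by simp
  have "(Z + Zi) * Z = Z * Z + 1\<^sub>m n" "Z * (Z + Zi) = Z * Z + 1\<^sub>m n"
    using assms by (simp_all add: add_mult_distrib_mat[of _ n n _ _ n] mult_add_distrib_mat[of _ n n _ n])
  then have "(Z * Z + 1\<^sub>m n) ^\<^sub>m k = (Z + Zi) ^\<^sub>m k * Z ^\<^sub>m k"
    using pow_mat_mult_distrib[OF S assms(1)] by metis
  moreover have "Z ^\<^sub>m k * Zi ^\<^sub>m k = 1\<^sub>m n"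
    using pow_mat_mult_distrib[OF assms(1,2), of k] assms(3,4) by simp
  ultimately show ?thesis
    using S assms(1,2) by (simp add: assoc_mult_mat[of _ n n _ n _ n])
qed

lemma symplectic_square_not_similar_jordan_block_neg_one:
  fixes J Z :: "'a :: field mat"
  assumes "(2::'a) \<noteq> 0" "0 < n" and form: "nondeg_alternating_form n J"
    and Z: "Z \<in> symplectic_group n J"
  shows "\<not> similar_mat (Z * Z) (jordan_block n (-1))"
proof
  assume "similar_mat (Z * Z) (jordan_block n (-1))"
  then obtain P Q where wit: "similar_mat_wit (Z * Z) (jordan_block n (-1)) P Q"
    unfolding similar_mat_def by blast
  have J: "J \<in> carrier_mat n n" using form unfolding nondeg_alternating_form_def by simp
  have Zc: "Z \<in> carrier_mat n n" using Z unfolding symplectic_group_def by simp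
  note PQ = similar_mat_witD2[OF mult_carrier_mat[OF Zc Zc] wit]
  obtain Ji where Ji: "Ji \<in> carrier_mat n n" "Ji * J = 1\<^sub>m n"
    using nondeg_alternating_form_left_inverse[OF form] .
  obtain Zi where Zi: "Zi \<in> carrier_mat n n" "Zi * Z = 1\<^sub>m n" "Z * Zi = 1\<^sub>m n"
    using symplectic_group_inverse[OF Z J Ji] .
  define S where "S = Z + Zi"
  have S: "S \<in> carrier_mat n n" using Zc Zi by (simp add: S_def)
  have "S ^\<^sub>m (n - 1) = P * jordan_block n 0 ^\<^sub>m (n - 1) * Q * Zi ^\<^sub>m (n - 1)"
    using add_inverse_pow[OF Zc Zi]
      similar_jordan_block_neg_one_add_one_pow[OF mult_carrier_mat[OF Zc Zc] wit]
    unfolding S_def by simp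
  then have "J * S ^\<^sub>m (n - 1)
      = (J * P) * jordan_block n 0 ^\<^sub>m (n - 1) * (Q * Zi ^\<^sub>m (n - 1))"
    using J PQ(6,7) Zi(1) by (simp add: assoc_mult_mat[of _ n n _ n _ n] mult_carrier_mat[of _ n n])
  moreover have "transpose_mat (J * S ^\<^sub>m (n - 1)) = - (J * S ^\<^sub>m (n - 1))"
    using self_adjoint_pow_skew[OF S J _ nondeg_alternating_form_skew[OF form]]
      symplectic_add_inverse_self_adjoint[OF Z J Zi(1,3)] unfolding S_def by blast
  moreover have "(Q * Ji) * (J * P) = 1\<^sub>m n"
    using mult_inverse_pair_conj[OF PQ(7) Ji(1) J PQ(6) Ji(2) PQ(2)] .
  moreover have "(Q * Zi ^\<^sub>m (n - 1)) * (Z ^\<^sub>m (n - 1) * P) = 1\<^sub>m n"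
    using mult_inverse_pair_conj[OF PQ(7) _ _ PQ(6) _ PQ(2)]
      pow_mat_mult_distrib[OF Zi(1) Zc, of "n - 1"] Zi Zc by simp
  ultimately show False
    using conj_jordan_block_zero_pow_pred_not_skew[OF assms(1,2),
        of "J * P" "Q * Ji" "Q * Zi ^\<^sub>m (n - 1)" "Z ^\<^sub>m (n - 1) * P"]
      J Ji PQ(6,7) Zi(1) Zc by (simp add: mult_carrier_mat[of _ n n])
qed

lemma of_nat_neq_0_if_coprime_card:
  assumes "coprime M (card (UNIV :: 'a :: ring_1 set))"
  shows "(of_nat M :: 'a) \<noteq> 0"
proof
  assume "(of_nat M :: 'a) = 0"
  then have "CHAR('a) dvd M" by (simp only: of_nat_eq_0_iff_char_dvd)
  then have "CHAR('a) = 1" using coprime_common_divisor_nat[OF assms] CHAR_dvd_CARD by blast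
  then show False by simp
qed

lemma symplectic_even_power_is_square:
  assumes "is_Mth_power_in (symplectic_group n J) M X" "even M" "J \<in> carrier_mat n n"
  obtains Z where "Z \<in> symplectic_group n J" "Z * Z = X"
proof -
  obtain Y where Y: "Y \<in> symplectic_group n J" "Y ^\<^sub>m M = X"
    using assms(1) unfolding is_Mth_power_in_def by blast
  have "Y \<in> carrier_mat n n" using Y(1) unfolding symplectic_group_def by simp
  then have "Y ^\<^sub>m (M div 2) * Y ^\<^sub>m (M div 2) = Y ^\<^sub>m (M div 2 + M div 2)"
    by (simp only: pow_mat_add)
  also have "\<dots> = X" using Y(2) assms(2) by (simp flip: mult_2)
  finally show thesis using symplectic_group_pow[OF Y(1) assms(3)] that by blast
qed

theorem corollary7p3:
  fixes J X :: "'a :: {finite, field} mat" and M m :: nat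
  assumes "M \<ge> 2" and "coprime M (card (UNIV :: 'a set))" and "m \<ge> 1"
    and "nondeg_alternating_form (2 * m) J"
    and "X \<in> symplectic_group (2 * m) J"
    and "similar_mat X (jordan_block (2 * m) (-1))"
  shows "is_Mth_power_in (symplectic_group (2 * m) J) M X \<longleftrightarrow> odd M"
proof -
  have J: "J \<in> carrier_mat (2 * m) (2 * m)"
    using assms(4) unfolding nondeg_alternating_form_def by simp
  have X: "X \<in> carrier_mat (2 * m) (2 * m)"
    using assms(5) unfolding symplectic_group_def by simp
  show ?thesis
  proof
    assume "is_Mth_power_in (symplectic_group (2 * m) J) M X"
    show "odd M"
    proof
      assume "even M"
      then have "(2::'a) * of_nat (M div 2) \<noteq> 0"
        using of_nat_neq_0_if_coprime_card[OF assms(2)]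
        by (metis dvd_mult_div_cancel of_nat_mult of_nat_numeral)
      moreover obtain Z where "Z \<in> symplectic_group (2 * m) J" "Z * Z = X"
        using symplectic_even_power_is_square[OF \<open>is_Mth_power_in _ M X\<close> \<open>even M\<close> J] .
      ultimately show False
        using symplectic_square_not_similar_jordan_block_neg_one[OF _ _ assms(4)] assms(3,6) by auto
    qed
  next
    assume "odd M"
    then have "coprime M (CHAR('a) ^ (2 * m) * 2)"
      using coprime_divisors[OF dvd_refl CHAR_dvd_CARD assms(2)] by simp
    then show "is_Mth_power_in (symplectic_group (2 * m) J) M X"
      using is_Mth_power_in_if_pow_eq_one[OF X symplectic_group_pow[OF assms(5) J]]
        similar_jordan_block_neg_one_pow_eq_one[OF X assms(6)] by blast
  qed
qed

end
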